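(* Let $f(z)=\frac{az+b}{cz+d}$ be a Möbius transformation, and put $r=f(\zeta)$, $s=f(\xi)$. Let $G(r,s)$ be a $\mathbb C^2$-valued holomorphic function satisfying $$G_{rs}=\frac1{2(r-s)}(G_r-G_s).$$ Let $\lambda(\zeta,\xi)$ satisfy $\lambda^2=\dfrac{r-s}{f'(\zeta)(\zeta-\xi)}$ (equivalently $\lambda^{-2}=\dfrac{r-s}{f'(\xi)(\zeta-\xi)}$). Then $\alpha'=\lambda G_\zeta$ and $\beta'=\lambda^{-1}G_\xi$ satisfy $\alpha'_\xi=\frac1{2(\zeta-\xi)}(\alpha'-\beta')=\beta'_\zeta$; consequently there is locally a function $F(\zeta,\xi)$ with $F_\zeta=\alpha'$, $F_\xi=\beta'$, which satisfies $$F_{\zeta\xi}=\frac1{2(\zeta-\xi)}(F_\zeta-F_\xi),$$ and $$dr\,ds+H_{G_r,G_s}=f'(\zeta)f'(\xi)\bigl(d\zeta\,d\xi+H_{F_\zeta,F_\xi}\bigr).$$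
   Context: For $A=(A_1,A_2),B=(B_1,B_2)\in\mathbb C^2$ (possibly depending on the base coordinates) and fibre coordinates $(u_1,u_2)$, $$H_{A,B}=\frac{(A_2\,du_1-A_1\,du_2)(B_2\,du_1-B_1\,du_2)}{(A_2B_1-A_1B_2)^2}.$$ Subscripts denote partial derivatives; $G_\zeta=\partial_\zeta(G(f(\zeta),f(\xi)))$ etc. *)

theory Defs
  imports "HOL-Analysis.Analysis"
begin

definition moebius :: "complex \<Rightarrow> complex \<Rightarrow> complex \<Rightarrow> complex \<Rightarrow> complex \<Rightarrow> complex" where
  "moebius a b c d z = (a * z + b) / (c * z + d)"

definition holo2 :: "(complex \<times> complex \<Rightarrow> complex) \<Rightarrow> (complex \<times> complex) set \<Rightarrow> bool" where
  "holo2 g V \<longleftrightarrow> (\<forall>p\<in>V. \<exists>A B. (g has_derivative (\<lambda>h. A * fst h + B * snd h)) (at p))"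

definition holoC2 :: "(complex \<times> complex \<Rightarrow> complex \<times> complex) \<Rightarrow> (complex \<times> complex) set \<Rightarrow> bool" where
  "holoC2 G V \<longleftrightarrow> holo2 (\<lambda>p. fst (G p)) V \<and> holo2 (\<lambda>p. snd (G p)) V"

definition csc :: "complex \<Rightarrow> complex \<times> complex \<Rightarrow> complex \<times> complex" where
  "csc c v = (c * fst v, c * snd v)"

definition pd1 :: "(complex \<times> complex \<Rightarrow> complex \<times> complex) \<Rightarrow> complex \<times> complex \<Rightarrow> complex \<times> complex" where
  "pd1 G p = (deriv (\<lambda>t. fst (G (t, snd p))) (fst p), deriv (\<lambda>t. snd (G (t, snd p))) (fst p))"

definition pd2 :: "(complex \<times> complex \<Rightarrow> complex \<times> complex) \<Rightarrow> complex \<times> complex \<Rightarrow> complex \<times> complex" where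
  "pd2 G p = (deriv (\<lambda>t. fst (G (fst p, t))) (snd p), deriv (\<lambda>t. snd (G (fst p, t))) (snd p))"

text \<open>The quadratic form H_{A,B} evaluated on a fibre tangent vector v = (du1, du2).\<close>
definition Hform :: "complex \<times> complex \<Rightarrow> complex \<times> complex \<Rightarrow> complex \<times> complex \<Rightarrow> complex" where
  "Hform A B v = ((snd A * fst v - fst A * snd v) * (snd B * fst v - fst B * snd v))
                 / (snd A * fst B - fst A * snd B)^2"

end

theory Submission
  imports Defs "HOL-Complex_Analysis.Complex_Analysis"
begin

(*
  Write u = c zeta + d, w = c xi + d and k = a d - b c. Then f'(zeta) = k / u^2,
  r - s = k (zeta - xi) / (u w) and lambda^2 = u / w, so that lambda_zeta = c lambda / (2 u) and
  lambda_xi = - c lambda / (2 w). Differentiating alpha' = lambda f'(zeta) G_r (f zeta, f xi) in xi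
  and inserting the Euler-Poisson-Darboux equation for G gives alpha'_xi = (alpha' - beta') / (2 (zeta - xi)).
  The same computation for beta' = lambda^-1 f'(xi) G_s (f zeta, f xi) needs G_sr = G_rs; as G is only
  assumed complex differentiable, the symmetry of the mixed partials (and the continuity of the
  partials) is obtained from Cauchy's integral formula. Hence alpha' dzeta + beta' dxi is closed and
  has a primitive F on every bidisc in U. The metric identity is the scaling law
  H_{mu A, nu B} = H_{A, B} / (mu nu) with mu nu = lambda f'(zeta) * f'(xi) / lambda.
*)

section \<open>Partial derivatives of holomorphic functions of two variables\<close>

lemma open_swap_image:
  fixes V :: "('a::t2_space \<times> 'b::t2_space) set"
  assumes "open V"
  shows "open (prod.swap ` V)"
proof -
  have "open ((\<lambda>p. (snd p, fst p)) -` V)"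
    by (rule continuous_open_vimage[OF assms]) (intro continuous_intros)
  moreover have "prod.swap ` V = (\<lambda>p. (snd p, fst p)) -` V"
  proof (rule set_eqI)
    fix p :: "'b \<times> 'a"
    show "p \<in> prod.swap ` V \<longleftrightarrow> p \<in> (\<lambda>p. (snd p, fst p)) -` V"
      using pair_in_swap_image[of "fst p" "snd p" V] by simp
  qed
  ultimately show ?thesis by simp
qed

lemma open_slice1:
  fixes V :: "('a::t2_space \<times> 'b::t2_space) set"
  assumes "open V"
  shows "open {t. (t, s) \<in> V}"
proof -
  have "open ((\<lambda>t. (t, s)) -` V)"
    by (rule continuous_open_vimage[OF assms]) (intro continuous_intros)
  then show ?thesis by (simp add: vimage_def)
qed

lemma open_slice2:
  fixes V :: "('a::t2_space \<times> 'b::t2_space) set"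
  assumes "open V"
  shows "open {t. (r, t) \<in> V}"
proof -
  have "open ((\<lambda>t. (r, t)) -` V)"
    by (rule continuous_open_vimage[OF assms]) (intro continuous_intros)
  then show ?thesis by (simp add: vimage_def)
qed

lemma open_contains_cball_Times:
  fixes V :: "('a::metric_space \<times> 'b::metric_space) set"
  assumes "open V" "(r, s) \<in> V"
  obtains e where "e > 0" "cball r e \<times> cball s e \<subseteq> V"
proof -
  obtain A B where AB: "open A" "open B" "(r, s) \<in> A \<times> B" "A \<times> B \<subseteq> V"
    by (rule open_prod_elim[OF assms])
  obtain e1 where e1: "e1 > 0" "cball r e1 \<subseteq> A" using AB(1,3) open_contains_cball by blast
  obtain e2 where e2: "e2 > 0" "cball s e2 \<subseteq> B" using AB(2,3) open_contains_cball by blast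
  have "cball r (min e1 e2) \<times> cball s (min e1 e2) \<subseteq> A \<times> B"
    using e1(2) e2(2) subset_cball[of "min e1 e2" e1 r] subset_cball[of "min e1 e2" e2 s] by auto
  then show thesis using that[of "min e1 e2"] e1(1) e2(1) AB(4) by auto
qed

definition partial1 :: "(complex \<times> complex \<Rightarrow> complex) \<Rightarrow> complex \<times> complex \<Rightarrow> complex" where
  "partial1 g p = deriv (\<lambda>t. g (t, snd p)) (fst p)"

definition partial2 :: "(complex \<times> complex \<Rightarrow> complex) \<Rightarrow> complex \<times> complex \<Rightarrow> complex" where
  "partial2 g p = deriv (\<lambda>t. g (fst p, t)) (snd p)"

lemma pd1_eq_partial1: "pd1 G p = (partial1 (\<lambda>q. fst (G q)) p, partial1 (\<lambda>q. snd (G q)) p)"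
  unfolding pd1_def partial1_def ..

lemma pd2_eq_partial2: "pd2 G p = (partial2 (\<lambda>q. fst (G q)) p, partial2 (\<lambda>q. snd (G q)) p)"
  unfolding pd2_def partial2_def ..

lemma partial1_swap: "partial1 g (r, s) = partial2 (\<lambda>p. g (snd p, fst p)) (s, r)"
  unfolding partial1_def partial2_def by simp

lemma partial2_swap: "partial2 g (r, s) = partial1 (\<lambda>p. g (snd p, fst p)) (s, r)"
  unfolding partial1_def partial2_def by simp

lemma has_derivative_pair_imp_has_field_derivative:
  assumes "(g has_derivative (\<lambda>h. A * fst h + B * snd h)) (at (r, s))"
  shows "((\<lambda>t. g (t, s)) has_field_derivative A) (at r)"
    and "((\<lambda>t. g (r, t)) has_field_derivative B) (at s)"
proof -
  have "((\<lambda>t. (t, s)) has_derivative (\<lambda>h. (h, 0))) (at r)"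
    by (auto intro!: derivative_eq_intros)
  from has_derivative_compose[OF this assms]
  show "((\<lambda>t. g (t, s)) has_field_derivative A) (at r)"
    by (simp add: has_field_derivative_def mult_commute_abs)
  have "((\<lambda>t. (r, t)) has_derivative (\<lambda>h. (0, h))) (at s)"
    by (auto intro!: derivative_eq_intros)
  from has_derivative_compose[OF this assms]
  show "((\<lambda>t. g (r, t)) has_field_derivative B) (at s)"
    by (simp add: has_field_derivative_def mult_commute_abs)
qed

lemma has_derivative_pair_imp_partials:
  assumes "(g has_derivative (\<lambda>h. A * fst h + B * snd h)) (at p)"
  shows "partial1 g p = A" "partial2 g p = B"
  using has_derivative_pair_imp_has_field_derivative[of g A B "fst p" "snd p"] assms
  by (auto simp: partial1_def partial2_def intro: DERIV_imp_deriv)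

lemma holo2_has_derivative:
  assumes "holo2 g V" "p \<in> V"
  shows "(g has_derivative (\<lambda>h. partial1 g p * fst h + partial2 g p * snd h)) (at p)"
  using assms has_derivative_pair_imp_partials unfolding holo2_def by blast

lemma holo2_has_field_derivative_partial1:
  assumes "holo2 g V" "(r, s) \<in> V"
  shows "((\<lambda>t. g (t, s)) has_field_derivative partial1 g (r, s)) (at r)"
  using has_derivative_pair_imp_has_field_derivative(1)[OF holo2_has_derivative[OF assms]] .

lemma holo2_has_field_derivative_partial2:
  assumes "holo2 g V" "(r, s) \<in> V"
  shows "((\<lambda>t. g (r, t)) has_field_derivative partial2 g (r, s)) (at s)"
  using has_derivative_pair_imp_has_field_derivative(2)[OF holo2_has_derivative[OF assms]] .

lemma holo2_imp_continuous_on: "holo2 g V \<Longrightarrow> continuous_on V g"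
  unfolding holo2_def
  by (meson continuous_at_imp_continuous_on has_derivative_continuous)

lemma holo2_swap:
  assumes "holo2 g V"
  shows "holo2 (\<lambda>p. g (snd p, fst p)) (prod.swap ` V)"
  unfolding holo2_def
proof
  fix p assume "p \<in> prod.swap ` V"
  then have "(snd p, fst p) \<in> V" by auto
  then obtain A B where dg: "(g has_derivative (\<lambda>h. A * fst h + B * snd h)) (at (snd p, fst p))"
    using assms unfolding holo2_def by blast
  have "((\<lambda>p. (snd p, fst p)) has_derivative (\<lambda>h. (snd h, fst h))) (at p)"
    by (auto intro!: derivative_eq_intros)
  from has_derivative_compose[OF this dg]
  have "((\<lambda>p. g (snd p, fst p)) has_derivative (\<lambda>h. B * fst h + A * snd h)) (at p)"
    by (simp add: add.commute)
  then show "\<exists>A B. ((\<lambda>p. g (snd p, fst p)) has_derivative (\<lambda>h. A * fst h + B * snd h)) (at p)"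
    by blast
qed

lemma holo2_holomorphic_on_slice1:
  assumes "holo2 g V"
  shows "(\<lambda>t. g (t, s)) holomorphic_on {t. (t, s) \<in> V}"
  unfolding holomorphic_on_def field_differentiable_def
  using holo2_has_field_derivative_partial1[OF assms] has_field_derivative_at_within by blast

lemma deriv_eq_contour_integral_circlepath:
  assumes "continuous_on (cball z e) f" "f holomorphic_on ball z e" "w \<in> ball z e"
  shows "deriv f w = contour_integral (circlepath z e) (\<lambda>u. f u / (u - w)^2) / (2 * pi * \<i>)"
proof -
  have "((\<lambda>u. f u / (u - w)^2) has_contour_integral (2 * pi * \<i> * deriv f w)) (circlepath z e)"
    using Cauchy_has_contour_integral_higher_derivative_circlepath[OF assms, of 1]
    by (simp add: power2_eq_square)
  then show ?thesis
    using contour_integral_unique by fastforce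
qed

lemma continuous_on_circlepath_integrand:
  assumes "0 \<le> e" and K: "continuous_on (Q \<times> sphere z e) (\<lambda>(q, w). K q w)"
  shows "continuous_on (Q \<times> cbox 0 1)
           (\<lambda>(q, t). K q (circlepath z e t) * vector_derivative (circlepath z e) (at t))"
proof -
  have "continuous_on (Q \<times> cbox 0 1) (\<lambda>(q, t). (q, circlepath z e t))"
    unfolding circlepath split_beta by (intro continuous_intros)
  moreover have "(\<lambda>(q, t). (q, circlepath z e t)) ` (Q \<times> cbox 0 1) \<subseteq> Q \<times> sphere z e"
    using path_image_circlepath_nonneg[OF assms(1)] by (auto simp: path_image_def)
  ultimately have "continuous_on (Q \<times> cbox 0 1)
      (\<lambda>x. (\<lambda>(q, w). K q w) ((\<lambda>(q, t). (q, circlepath z e t)) x))"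
    by (rule continuous_on_compose2[OF K])
  then have "continuous_on (Q \<times> cbox 0 1) (\<lambda>(q, t). K q (circlepath z e t))"
    by (simp add: split_beta)
  then show ?thesis
    unfolding vector_derivative_circlepath split_beta by (intro continuous_intros)
qed

lemma continuous_on_contour_integral_circlepath_param:
  assumes "0 \<le> e" and "continuous_on (Q \<times> sphere z e) (\<lambda>(q, w). K q w)"
  shows "continuous_on Q (\<lambda>q. contour_integral (circlepath z e) (K q))"
  using integral_continuous_on_param[OF continuous_on_circlepath_integrand[OF assms]]
  unfolding contour_integral_integral by simp

lemma has_field_derivative_contour_integral_circlepath_param:
  assumes "0 \<le> e" "convex Q" "q0 \<in> Q"
    and K': "\<And>q w. q \<in> Q \<Longrightarrow> w \<in> sphere z e \<Longrightarrow>
               ((\<lambda>q. K q w) has_field_derivative K' q w) (at q within Q)"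
    and "continuous_on (Q \<times> sphere z e) (\<lambda>(q, w). K q w)"
    and "continuous_on (Q \<times> sphere z e) (\<lambda>(q, w). K' q w)"
  shows "((\<lambda>q. contour_integral (circlepath z e) (K q)) has_field_derivative
           contour_integral (circlepath z e) (K' q0)) (at q0 within Q)"
proof -
  let ?I = "\<lambda>K q t. K q (circlepath z e t) * vector_derivative (circlepath z e) (at t)"
  have cont: "continuous_on (Q \<times> cbox 0 1) (\<lambda>(q, t). ?I K q t)"
    "continuous_on (Q \<times> cbox 0 1) (\<lambda>(q, t). ?I K' q t)"
    using continuous_on_circlepath_integrand assms(1,5,6) by blast+
  have "?I K q integrable_on cbox 0 1" if "q \<in> Q" for q
  proof (rule integrable_continuous)
    have "(\<lambda>t. (q, t)) ` cbox 0 1 \<subseteq> Q \<times> cbox 0 1" using that by auto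
    from continuous_on_compose2[OF cont(1) _ this]
    show "continuous_on (cbox 0 1) (?I K q)" by (simp add: continuous_on_Pair)
  qed
  moreover have "((\<lambda>q. ?I K q t) has_field_derivative ?I K' q t) (at q within Q)"
    if "q \<in> Q" "t \<in> cbox 0 1" for q t
  proof -
    have "circlepath z e t \<in> path_image (circlepath z e)"
      using that(2) unfolding path_image_def by simp
    then have "circlepath z e t \<in> sphere z e"
      using assms(1) by simp
    from DERIV_cmult_right[OF K'[OF that(1) this]] show ?thesis .
  qed
  ultimately show ?thesis
    using leibniz_rule_field_derivative[OF _ _ cont(2) assms(3,2)]
    unfolding contour_integral_integral by simp
qed

lemma holo2_partial1_eq_contour_integral:
  assumes "holo2 g V" "cball r0 e \<times> {s} \<subseteq> V" "r \<in> ball r0 e"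
  shows "partial1 g (r, s) = contour_integral (circlepath r0 e) (\<lambda>u. g (u, s) / (u - r)^2) / (2 * pi * \<i>)"
proof -
  have "(\<lambda>t. (t, s)) ` cball r0 e \<subseteq> V" using assms(2) by auto
  from continuous_on_compose2[OF holo2_imp_continuous_on[OF assms(1)] _ this]
  have "continuous_on (cball r0 e) (\<lambda>t. g (t, s))" by (simp add: continuous_on_Pair)
  moreover have "ball r0 e \<subseteq> {t. (t, s) \<in> V}" using assms(2) by auto
  then have "(\<lambda>t. g (t, s)) holomorphic_on ball r0 e"
    by (rule holomorphic_on_subset[OF holo2_holomorphic_on_slice1[OF assms(1)]])
  ultimately show ?thesis
    unfolding partial1_def using deriv_eq_contour_integral_circlepath assms(3) by simp
qed

lemma holo2_partial2_eq_contour_integral: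
  assumes "holo2 g V" "{r} \<times> cball s0 e \<subseteq> V" "s \<in> ball s0 e"
  shows "partial2 g (r, s) = contour_integral (circlepath s0 e) (\<lambda>u. g (r, u) / (u - s)^2) / (2 * pi * \<i>)"
proof -
  have "cball s0 e \<times> {r} \<subseteq> prod.swap ` V" using assms(2) by auto
  from holo2_partial1_eq_contour_integral[OF holo2_swap[OF assms(1)] this assms(3)]
  show ?thesis by (simp add: partial2_swap)
qed

(* Cauchy's formula represents partial1 g near each point by a circle integral
   depending continuously on the point. *)
lemma continuous_on_partial1:
  assumes "holo2 g V" "open V"
  shows "continuous_on V (partial1 g)"
proof -
  have "isCont (partial1 g) p" if pV: "p \<in> V" for p
  proof -
    obtain r0 s0 where p: "p = (r0, s0)" by fastforce
    obtain e where e: "e > 0" "cball r0 e \<times> cball s0 e \<subseteq> V"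
      by (rule open_contains_cball_Times[OF assms(2) pV[unfolded p]])
    define Q where "Q = ball r0 e \<times> ball s0 e"
    define K where "K = (\<lambda>q u. g (u, snd q) / (u - fst q)^2)"
    have "continuous_on (Q \<times> sphere r0 e) (\<lambda>x. g (snd x, snd (fst x)))"
    proof (rule continuous_on_compose2[OF holo2_imp_continuous_on[OF assms(1)]])
      show "continuous_on (Q \<times> sphere r0 e) (\<lambda>x. (snd x, snd (fst x)))"
        by (intro continuous_intros)
      show "(\<lambda>x. (snd x, snd (fst x))) ` (Q \<times> sphere r0 e) \<subseteq> V"
        using e(2) unfolding Q_def by auto
    qed
    moreover have "\<forall>x \<in> Q \<times> sphere r0 e. (snd x - fst (fst x))^2 \<noteq> 0"
      unfolding Q_def by (auto simp: dist_commute)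
    ultimately have "continuous_on (Q \<times> sphere r0 e) (\<lambda>(q, u). K q u)"
      unfolding K_def split_beta by (intro continuous_intros)
    then have "continuous_on Q (\<lambda>q. contour_integral (circlepath r0 e) (K q))"
      by (rule continuous_on_contour_integral_circlepath_param[rotated]) (use e(1) in simp)
    then have "continuous_on Q (\<lambda>q. contour_integral (circlepath r0 e) (K q) / (2 * pi * \<i>))"
      by (intro continuous_intros) auto
    moreover have "partial1 g q = contour_integral (circlepath r0 e) (K q) / (2 * pi * \<i>)"
      if "q \<in> Q" for q
    proof -
      have "cball r0 e \<times> {snd q} \<subseteq> V" using e(2) that unfolding Q_def by auto
      from holo2_partial1_eq_contour_integral[OF assms(1) this, of "fst q"] that
      show ?thesis unfolding Q_def K_def by auto
    qed
    ultimately have "continuous_on Q (partial1 g)"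
      by (simp add: continuous_on_eq)
    moreover have "open Q" "p \<in> Q"
      using e(1) unfolding Q_def p by (auto simp: open_Times)
    ultimately show "isCont (partial1 g) p"
      using continuous_on_eq_continuous_at by blast
  qed
  then show ?thesis by (simp add: continuous_at_imp_continuous_on)
qed

lemma continuous_on_partial2:
  assumes "holo2 g V" "open V"
  shows "continuous_on V (partial2 g)"
proof -
  have "continuous_on (prod.swap ` V) (partial1 (\<lambda>p. g (snd p, fst p)))"
    by (rule continuous_on_partial1[OF holo2_swap[OF assms(1)] open_swap_image[OF assms(2)]])
  then have "continuous_on V (\<lambda>p. partial1 (\<lambda>p. g (snd p, fst p)) (snd p, fst p))"
    by (rule continuous_on_compose2) (auto intro!: continuous_intros)
  moreover have "partial1 (\<lambda>p. g (snd p, fst p)) (snd p, fst p) = partial2 g p" for p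
    by (metis partial2_swap prod.collapse)
  ultimately show ?thesis by simp
qed

lemma holo2_partial2_has_field_derivative_contour_integral:
  assumes "holo2 g V" "open V" "e > 0" "cball r0 e \<times> cball s0 e \<subseteq> V"
  shows "((\<lambda>t. partial2 g (t, s0)) has_field_derivative
           contour_integral (circlepath s0 e) (\<lambda>u. partial1 g (r0, u) / (u - s0)^2) / (2 * pi * \<i>))
         (at r0)"
proof -
  define Q where "Q = ball r0 e"
  define K where "K = (\<lambda>r u. g (r, u) / (u - s0)^2)"
  define K' where "K' = (\<lambda>r u. partial1 g (r, u) / (u - s0)^2)"
  have QV: "Q \<times> sphere s0 e \<subseteq> V" using assms(4) unfolding Q_def by auto
  have nz: "\<forall>x \<in> Q \<times> sphere s0 e. (snd x - s0)^2 \<noteq> 0"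
    using assms(3) by auto
  have "continuous_on (Q \<times> sphere s0 e) g"
    using holo2_imp_continuous_on[OF assms(1)] QV by (rule continuous_on_subset)
  then have cK: "continuous_on (Q \<times> sphere s0 e) (\<lambda>(r, u). K r u)"
    using nz unfolding K_def split_beta prod.collapse by (intro continuous_intros)
  have "continuous_on (Q \<times> sphere s0 e) (partial1 g)"
    using continuous_on_partial1[OF assms(1,2)] QV by (rule continuous_on_subset)
  then have cK': "continuous_on (Q \<times> sphere s0 e) (\<lambda>(r, u). K' r u)"
    using nz unfolding K'_def split_beta prod.collapse by (intro continuous_intros)
  have dK: "((\<lambda>r. K r u) has_field_derivative K' r u) (at r within Q)"
    if "r \<in> Q" "u \<in> sphere s0 e" for r u
  proof -
    have "(r, u) \<in> V" using QV that by auto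
    from DERIV_cdivide[OF holo2_has_field_derivative_partial1[OF assms(1) this]]
    show ?thesis unfolding K_def K'_def by (rule has_field_derivative_at_within)
  qed
  have r0: "r0 \<in> Q" "open Q" "convex Q" using assms(3) unfolding Q_def by auto
  have D: "((\<lambda>r. contour_integral (circlepath s0 e) (K r) / (2 * pi * \<i>)) has_field_derivative
          contour_integral (circlepath s0 e) (K' r0) / (2 * pi * \<i>)) (at r0)"
    using has_field_derivative_contour_integral_circlepath_param[OF _ r0(3,1) dK cK cK'] assms(3)
      at_within_open[OF r0(1,2)] by (auto intro: DERIV_cdivide)
  have E: "contour_integral (circlepath s0 e) (K r) / (2 * pi * \<i>) = partial2 g (r, s0)"
    if "r \<in> Q" for r
  proof -
    have "{r} \<times> cball s0 e \<subseteq> V" using assms(4) that unfolding Q_def by auto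
    from holo2_partial2_eq_contour_integral[OF assms(1) this] assms(3)
    show ?thesis unfolding K_def by simp
  qed
  from has_field_derivative_transform_within_open[OF D r0(2,1) E]
  show ?thesis unfolding K'_def .
qed

lemma holo2_partial1_field_differentiable_slice2:
  assumes "holo2 g V" "open V" "(r, s) \<in> V"
  shows "(\<lambda>t. partial1 g (r, t)) field_differentiable at s"
proof -
  have "(s, r) \<in> prod.swap ` V" using assms(3) by simp
  then obtain e where "e > 0" "cball s e \<times> cball r e \<subseteq> prod.swap ` V"
    by (rule open_contains_cball_Times[OF open_swap_image[OF assms(2)]])
  from holo2_partial2_has_field_derivative_contour_integral[OF holo2_swap[OF assms(1)]
      open_swap_image[OF assms(2)] this]
  show ?thesis unfolding field_differentiable_def partial1_swap by blast
qed

(* Both mixed partials equal the same Cauchy integral of partial1 g over a circle. *)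
lemma holo2_mixed_partials:
  assumes "holo2 g V" "open V" "(r, s) \<in> V"
  shows "((\<lambda>t. partial1 g (r, t)) has_field_derivative partial2 (partial1 g) (r, s)) (at s)"
    and "((\<lambda>t. partial2 g (t, s)) has_field_derivative partial2 (partial1 g) (r, s)) (at r)"
proof -
  show "((\<lambda>t. partial1 g (r, t)) has_field_derivative partial2 (partial1 g) (r, s)) (at s)"
    using holo2_partial1_field_differentiable_slice2[OF assms]
    unfolding partial2_def by (simp add: DERIV_deriv_iff_field_differentiable)
  obtain e where e: "e > 0" "cball r e \<times> cball s e \<subseteq> V"
    by (rule open_contains_cball_Times[OF assms(2,3)])
  have "continuous_on (cball s e) (\<lambda>t. partial1 g (r, t))"
  proof (rule continuous_on_compose2[OF continuous_on_partial1[OF assms(1,2)]])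
    show "continuous_on (cball s e) (Pair r)" by (intro continuous_intros)
    show "Pair r ` cball s e \<subseteq> V" using e by auto
  qed
  moreover have "(\<lambda>t. partial1 g (r, t)) holomorphic_on ball s e"
    unfolding holomorphic_on_def
  proof
    fix t assume "t \<in> ball s e"
    then have "(r, t) \<in> V" using e by auto
    from holo2_partial1_field_differentiable_slice2[OF assms(1,2) this]
    show "(\<lambda>t. partial1 g (r, t)) field_differentiable at t within ball s e"
      by (rule field_differentiable_at_within)
  qed
  ultimately have "partial2 (partial1 g) (r, s) =
      contour_integral (circlepath s e) (\<lambda>u. partial1 g (r, u) / (u - s)^2) / (2 * pi * \<i>)"
    unfolding partial2_def using deriv_eq_contour_integral_circlepath e(1) by simp
  with holo2_partial2_has_field_derivative_contour_integral[OF assms(1,2) e]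
  show "((\<lambda>t. partial2 g (t, s)) has_field_derivative partial2 (partial1 g) (r, s)) (at r)"
    by simp
qed

lemma holo2_partial1_field_differentiable_slice1:
  assumes "holo2 g V" "open V" "(r, s) \<in> V"
  shows "(\<lambda>t. partial1 g (t, s)) field_differentiable at r"
proof -
  have "deriv (\<lambda>t. g (t, s)) holomorphic_on {t. (t, s) \<in> V}"
    by (rule holomorphic_deriv[OF holo2_holomorphic_on_slice1[OF assms(1)] open_slice1[OF assms(2)]])
  then show ?thesis
    using assms(3) open_slice1[OF assms(2)] holomorphic_on_imp_differentiable_at
    unfolding partial1_def by fastforce
qed

lemma holo2_partial2_field_differentiable_slice2:
  assumes "holo2 g V" "open V" "(r, s) \<in> V"
  shows "(\<lambda>t. partial2 g (r, t)) field_differentiable at s"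
  using holo2_partial1_field_differentiable_slice1[OF holo2_swap[OF assms(1)] open_swap_image[OF assms(2)]]
    assms(3)
  by (simp add: partial2_swap)

section \<open>Primitives of closed forms on products of convex sets\<close>

lemma has_field_derivative_contour_integral_linepath:
  fixes f :: "complex \<Rightarrow> complex"
  assumes "f holomorphic_on Y" "open Y" "convex Y" "x0 \<in> Y" "x \<in> Y"
  shows "((\<lambda>y. contour_integral (linepath x0 y) f) has_field_derivative f x) (at x)"
proof -
  obtain P where P: "\<And>u. u \<in> Y \<Longrightarrow> (P has_field_derivative f u) (at u within Y)"
    using holomorphic_convex_primitive'[OF assms(3,2,1)] by blast
  have eq: "P y - P x0 = contour_integral (linepath x0 y) f" if "y \<in> Y" for y
  proof -
    have "closed_segment x0 y \<subseteq> Y" using assms(3,4) that convex_contains_segment by blast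
    then have "(f has_contour_integral P (pathfinish (linepath x0 y)) - P (pathstart (linepath x0 y)))
                 (linepath x0 y)"
      by (intro contour_integral_primitive[OF P]) auto
    then show ?thesis using contour_integral_unique by simp
  qed
  have "((\<lambda>y. P y - P x0) has_field_derivative f x) (at x)"
    using P[OF assms(5)] at_within_open[OF assms(5,2)] by (auto intro!: derivative_eq_intros)
  from has_field_derivative_transform_within_open[OF this assms(2,5) eq]
  show ?thesis .
qed

lemma has_field_derivative_contour_integral_linepath_param:
  fixes b m :: "complex \<Rightarrow> complex \<Rightarrow> complex"
  assumes "convex X" "z \<in> X"
    and b': "\<And>z u. z \<in> X \<Longrightarrow> u \<in> closed_segment x0 x \<Longrightarrow>
               ((\<lambda>z. b z u) has_field_derivative m z u) (at z within X)"
    and cb: "continuous_on (X \<times> closed_segment x0 x) (\<lambda>(z, u). b z u)"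
    and cm: "continuous_on (X \<times> closed_segment x0 x) (\<lambda>(z, u). m z u)"
  shows "((\<lambda>z. contour_integral (linepath x0 x) (b z)) has_field_derivative
           contour_integral (linepath x0 x) (m z)) (at z within X)"
proof -
  have seg: "linepath x0 x t \<in> closed_segment x0 x" if "t \<in> cbox 0 1" for t
    using linepath_in_path that by simp
  have lp: "continuous_on (X \<times> cbox 0 1) (\<lambda>(z, t). (z, linepath x0 x t))"
    unfolding linepath_def split_beta by (intro continuous_intros)
  have lp_in: "(\<lambda>(z, t). (z, linepath x0 x t)) ` (X \<times> cbox 0 1) \<subseteq> X \<times> closed_segment x0 x"
    using seg by auto
  have "continuous_on (X \<times> cbox 0 1) (\<lambda>p. (\<lambda>(z, u). m z u) ((\<lambda>(z, t). (z, linepath x0 x t)) p))"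
    using continuous_on_compose2[OF cm lp lp_in] .
  then have cm': "continuous_on (X \<times> cbox 0 1) (\<lambda>(z, t). m z (linepath x0 x t) * (x - x0))"
    unfolding split_beta by (intro continuous_intros) simp
  have "continuous_on (X \<times> cbox 0 1) (\<lambda>p. (\<lambda>(z, u). b z u) ((\<lambda>(z, t). (z, linepath x0 x t)) p))"
    using continuous_on_compose2[OF cb lp lp_in] .
  then have cb': "continuous_on (X \<times> cbox 0 1) (\<lambda>(z, t). b z (linepath x0 x t) * (x - x0))"
    unfolding split_beta by (intro continuous_intros) simp
  have int: "(\<lambda>t. b z' (linepath x0 x t) * (x - x0)) integrable_on cbox 0 1" if "z' \<in> X" for z'
  proof (rule integrable_continuous)
    have "(\<lambda>t. (z', t)) ` cbox 0 1 \<subseteq> X \<times> cbox 0 1" using that by auto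
    from continuous_on_compose2[OF cb' _ this]
    show "continuous_on (cbox 0 1) (\<lambda>t. b z' (linepath x0 x t) * (x - x0))"
      by (simp add: continuous_on_Pair)
  qed
  have dd: "((\<lambda>z. b z (linepath x0 x t) * (x - x0)) has_field_derivative
                   m z' (linepath x0 x t) * (x - x0)) (at z' within X)"
    if "z' \<in> X" "t \<in> cbox 0 1" for z' t
    using DERIV_cmult_right[OF b'[OF that(1) seg[OF that(2)]]] .
  from leibniz_rule_field_derivative[OF dd int cm' assms(2,1)]
  show ?thesis unfolding contour_integral_integral by simp
qed

lemma has_derivative_pair_of_partials:
  fixes F :: "complex \<Rightarrow> complex \<Rightarrow> complex"
  assumes "open X" "open Y" "convex Y" "z \<in> X" "x \<in> Y"
    and F1: "((\<lambda>z. F z x) has_field_derivative A) (at z)"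
    and F2: "\<And>z x. z \<in> X \<Longrightarrow> x \<in> Y \<Longrightarrow> ((\<lambda>x. F z x) has_field_derivative B (z, x)) (at x)"
    and "continuous_on (X \<times> Y) B"
  shows "((\<lambda>p. F (fst p) (snd p)) has_derivative (\<lambda>h. A * fst h + B (z, x) * snd h)) (at (z, x))"
proof -
  have d1: "((\<lambda>z. F z x) has_derivative (*) A) (at z within X)"
    using F1 by (simp add: has_field_derivative_def has_derivative_at_withinI)
  have d2: "((\<lambda>x. F z' x) has_derivative blinfun_apply (blinfun_mult_right (B (z', x)))) (at x within Y)"
    if "z' \<in> X" "x \<in> Y" for z' x
    using F2[OF that] by (simp add: has_field_derivative_def has_derivative_at_withinI)
  have c: "continuous (at (z, x) within X \<times> Y) (\<lambda>(z', x). blinfun_mult_right (B (z', x)))"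
    using assms(4,5,8) unfolding split_beta prod.collapse
    by (intro continuous_intros) (auto simp: continuous_on_eq_continuous_within)
  from has_derivative_partialsI[OF d1 d2 c assms(5,3)]
  have "((\<lambda>(z, x). F z x) has_derivative (\<lambda>(tx, ty). A * tx + B (z, x) * ty))
          (at (z, x) within X \<times> Y)"
    by simp
  moreover have "at (z, x) within X \<times> Y = at (z, x)"
    using assms(1,2,4,5) by (intro at_within_open) (auto simp: open_Times)
  ultimately show ?thesis by (simp add: split_beta case_prod_beta')
qed

lemma has_field_derivative_contour_integral_closed_form:
  fixes a b m :: "complex \<times> complex \<Rightarrow> complex"
  assumes X: "open X" "convex X" "z \<in> X" and Y: "convex Y" "x0 \<in> Y" "x \<in> Y"
    and cb: "continuous_on (X \<times> Y) b" and cm: "continuous_on (X \<times> Y) m"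
    and a2: "\<And>z x. z \<in> X \<Longrightarrow> x \<in> Y \<Longrightarrow> ((\<lambda>t. a (z, t)) has_field_derivative m (z, x)) (at x)"
    and b1: "\<And>z x. z \<in> X \<Longrightarrow> x \<in> Y \<Longrightarrow> ((\<lambda>t. b (t, x)) has_field_derivative m (z, x)) (at z)"
  shows "((\<lambda>z. contour_integral (linepath x0 x) (\<lambda>u. b (z, u))) has_field_derivative
           a (z, x) - a (z, x0)) (at z)"
proof -
  have seg: "closed_segment x0 x \<subseteq> Y" using Y convex_contains_segment by blast
  then have Xseg: "X \<times> closed_segment x0 x \<subseteq> X \<times> Y" by auto
  have "((\<lambda>z. contour_integral (linepath x0 x) (\<lambda>u. b (z, u))) has_field_derivative
          contour_integral (linepath x0 x) (\<lambda>u. m (z, u))) (at z within X)"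
  proof (rule has_field_derivative_contour_integral_linepath_param[OF X(2,3)])
    show "((\<lambda>z. b (z, u)) has_field_derivative m (z', u)) (at z' within X)"
      if "z' \<in> X" "u \<in> closed_segment x0 x" for z' u
      using b1[of z' u] that seg by (auto intro: has_field_derivative_at_within)
    show "continuous_on (X \<times> closed_segment x0 x) (\<lambda>(z, u). b (z, u))"
      using continuous_on_subset[OF cb Xseg] by simp
    show "continuous_on (X \<times> closed_segment x0 x) (\<lambda>(z, u). m (z, u))"
      using continuous_on_subset[OF cm Xseg] by simp
  qed
  moreover have "((\<lambda>u. m (z, u)) has_contour_integral
                   a (z, pathfinish (linepath x0 x)) - a (z, pathstart (linepath x0 x))) (linepath x0 x)"
    by (rule contour_integral_primitive[where S = Y])
      (use seg a2 X(3) in \<open>auto intro: has_field_derivative_at_within\<close>)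
  ultimately show ?thesis
    using at_within_open[OF X(3,1)] contour_integral_unique by fastforce
qed

(* The primitive is F (z, x) = Phi z + (integral of b (z, _) along [x0, x]) with Phi' = a (_, x0). *)
lemma exists_primitive_on_convex_Times:
  fixes a b m :: "complex \<times> complex \<Rightarrow> complex"
  assumes X: "open X" "convex X" and Y: "open Y" "convex Y" "x0 \<in> Y"
    and cb: "continuous_on (X \<times> Y) b" and cm: "continuous_on (X \<times> Y) m"
    and a1: "\<And>z. z \<in> X \<Longrightarrow> (\<lambda>t. a (t, x0)) field_differentiable at z"
    and b2: "\<And>z x. z \<in> X \<Longrightarrow> x \<in> Y \<Longrightarrow> (\<lambda>t. b (z, t)) field_differentiable at x"
    and a2: "\<And>z x. z \<in> X \<Longrightarrow> x \<in> Y \<Longrightarrow> ((\<lambda>t. a (z, t)) has_field_derivative m (z, x)) (at x)"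
    and b1: "\<And>z x. z \<in> X \<Longrightarrow> x \<in> Y \<Longrightarrow> ((\<lambda>t. b (t, x)) has_field_derivative m (z, x)) (at z)"
  obtains F where "\<And>p. p \<in> X \<times> Y \<Longrightarrow> (F has_derivative (\<lambda>h. a p * fst h + b p * snd h)) (at p)"
proof -
  have "(\<lambda>t. a (t, x0)) holomorphic_on X"
    using a1 by (simp add: field_differentiable_at_within holomorphic_on_def)
  then obtain Phi where Phi: "\<And>z. z \<in> X \<Longrightarrow> (Phi has_field_derivative a (z, x0)) (at z within X)"
    by (rule holomorphic_convex_primitive'[OF X(2,1)]) blast
  define Psi where "Psi z x = contour_integral (linepath x0 x) (\<lambda>u. b (z, u))" for z x
  have "((\<lambda>p. Phi (fst p) + Psi (fst p) (snd p)) has_derivative (\<lambda>h. a p * fst h + b p * snd h)) (at p)"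
    if "p \<in> X \<times> Y" for p
  proof -
    obtain z x where p: "p = (z, x)" "z \<in> X" "x \<in> Y" using \<open>p \<in> X \<times> Y\<close> by blast
    have "(Phi has_field_derivative a (z, x0)) (at z)"
      using Phi[OF p(2)] at_within_open[OF p(2) X(1)] by simp
    from DERIV_add[OF this has_field_derivative_contour_integral_closed_form[OF X p(2) Y(2,3) p(3) cb cm a2 b1]]
    have F1: "((\<lambda>z. Phi z + Psi z x) has_field_derivative a (z, x)) (at z)"
      unfolding Psi_def by simp
    have F2: "((\<lambda>x. Phi z + Psi z x) has_field_derivative b (z, x)) (at x)"
      if "z \<in> X" "x \<in> Y" for z x
    proof -
      have "(\<lambda>u. b (z, u)) holomorphic_on Y"
        using b2[OF that(1)] by (simp add: field_differentiable_at_within holomorphic_on_def)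
      from has_field_derivative_contour_integral_linepath[OF this Y that(2)]
      show ?thesis unfolding Psi_def by (auto intro!: derivative_eq_intros)
    qed
    from has_derivative_pair_of_partials[where F = "\<lambda>z x. Phi z + Psi z x", OF X(1) Y(1,2) p(2,3) F1 F2 cb]
    show ?thesis unfolding p by simp
  qed
  then show thesis using that by blast
qed

section \<open>Pullback by a Moebius transformation\<close>

lemma moebius_has_field_derivative:
  assumes "c * t + d \<noteq> 0"
  shows "(moebius a b c d has_field_derivative (a * d - b * c) / (c * t + d)^2) (at t)"
proof -
  have "((\<lambda>z. (a * z + b) / (c * z + d)) has_field_derivative
          (a * (c * t + d) - (a * t + b) * c) / ((c * t + d) * (c * t + d))) (at t)"
    using assms by (auto intro!: derivative_eq_intros)
  moreover have "(a * (c * t + d) - (a * t + b) * c) / ((c * t + d) * (c * t + d))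
                 = (a * d - b * c) / (c * t + d)^2"
    by (simp add: power2_eq_square algebra_simps)
  ultimately show ?thesis by (simp add: moebius_def[abs_def])
qed

lemma moebius_diff:
  assumes "c * z + d \<noteq> 0" "c * x + d \<noteq> 0"
  shows "moebius a b c d z - moebius a b c d x = (a * d - b * c) * (z - x) / ((c * z + d) * (c * x + d))"
  unfolding moebius_def using assms by (simp add: field_simps)

definition epd_on :: "(complex \<times> complex \<Rightarrow> complex) \<Rightarrow> (complex \<times> complex) set \<Rightarrow> bool" where
  "epd_on g V \<longleftrightarrow> (\<forall>r s. (r, s) \<in> V \<longrightarrow>
     partial2 (partial1 g) (r, s) = 1 / (2 * (r - s)) * (partial1 g (r, s) - partial2 g (r, s)))"

(* The computations behind alpha'_xi and beta'_zeta, with u = c zeta + d, w = c xi + d,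
   k = a d - b c, y = zeta - xi, l = lambda, P = G_r and Q = G_s. *)
lemma epd_alpha_identity:
  fixes c k l u w y P Q :: complex
  assumes "k \<noteq> 0" "u \<noteq> 0" "w \<noteq> 0" "y \<noteq> 0" "l \<noteq> 0" "u = w + c * y"
  shows "(- c * l / (2 * w) * (k / u^2)) * P
           + (1 / (2 * (k * y / (u * w))) * (P - Q) * (k / w^2)) * (l * (k / u^2))
         = 1 / (2 * y) * (l * (k / u^2) * P - l * k / (u * w) * Q)"
proof -
  have "(- c * l / (2 * w) * (k / u^2)) * P
           + (1 / (2 * (k * y / (u * w))) * (P - Q) * (k / w^2)) * (l * (k / u^2))
        = l * k / (2 * y * u^2 * w) * (u * (P - Q) - c * y * P)"
    using assms(1-5) by (simp add: field_simps power2_eq_square)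
  also have "u * (P - Q) - c * y * P = w * P - u * Q"
    using assms(6) by (simp add: algebra_simps)
  also have "l * k / (2 * y * u^2 * w) * (w * P - u * Q)
             = 1 / (2 * y) * (l * (k / u^2) * P - l * k / (u * w) * Q)"
    using assms(1-5) by (simp add: field_simps power2_eq_square)
  finally show ?thesis .
qed

lemma epd_beta_identity:
  fixes c k l u w y P Q :: complex
  assumes "k \<noteq> 0" "u \<noteq> 0" "w \<noteq> 0" "y \<noteq> 0" "l \<noteq> 0" "u = w + c * y"
  shows "(0 * l - k / w^2 * (c * l / (2 * u))) / (l * l) * Q
           + (1 / (2 * (k * y / (u * w))) * (P - Q) * (k / u^2)) * (k / w^2 / l)
         = 1 / (2 * y) * (k / (l * u * w) * P - k / w^2 / l * Q)"
proof -
  have "(0 * l - k / w^2 * (c * l / (2 * u))) / (l * l) * Q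
           + (1 / (2 * (k * y / (u * w))) * (P - Q) * (k / u^2)) * (k / w^2 / l)
        = k / (2 * y * u * w^2 * l) * (w * (P - Q) - c * y * Q)"
    using assms(1-5) by (simp add: field_simps power2_eq_square)
  also have "w * (P - Q) - c * y * Q = w * P - u * Q"
    using assms(6) by (simp add: algebra_simps)
  also have "k / (2 * y * u * w^2 * l) * (w * P - u * Q)
             = 1 / (2 * y) * (k / (l * u * w) * P - k / w^2 / l * Q)"
    using assms(1-5) by (simp add: field_simps power2_eq_square)
  finally show ?thesis .
qed

locale moebius_pullback =
  fixes a b c d :: complex and f :: "complex \<Rightarrow> complex"
    and U V :: "(complex \<times> complex) set" and lam :: "complex \<times> complex \<Rightarrow> complex"
  assumes moeb: "a * d - b * c \<noteq> 0"
    and f_def: "f = moebius a b c d"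
    and U_open: "open U"
    and U_dom: "\<And>z x. (z, x) \<in> U \<Longrightarrow> c * z + d \<noteq> 0 \<and> c * x + d \<noteq> 0 \<and> z \<noteq> x"
    and V_open: "open V"
    and UV: "\<And>z x. (z, x) \<in> U \<Longrightarrow> (f z, f x) \<in> V"
    and lam_holo: "holo2 lam U"
    and lam_sq: "\<And>z x. (z, x) \<in> U \<Longrightarrow> (lam (z, x))\<^sup>2 = (f z - f x) / (deriv f z * (z - x))"
begin

definition alpha_of :: "(complex \<times> complex \<Rightarrow> complex) \<Rightarrow> complex \<times> complex \<Rightarrow> complex" where
  "alpha_of g p = lam p * partial1 (\<lambda>q. g (f (fst q), f (snd q))) p"

definition beta_of :: "(complex \<times> complex \<Rightarrow> complex) \<Rightarrow> complex \<times> complex \<Rightarrow> complex" where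
  "beta_of g p = 1 / lam p * partial2 (\<lambda>q. g (f (fst q), f (snd q))) p"

lemma f_has_field_derivative:
  "c * t + d \<noteq> 0 \<Longrightarrow> (f has_field_derivative (a * d - b * c) / (c * t + d)^2) (at t)"
  unfolding f_def by (rule moebius_has_field_derivative)

lemma deriv_f: "c * t + d \<noteq> 0 \<Longrightarrow> deriv f t = (a * d - b * c) / (c * t + d)^2"
  using f_has_field_derivative by (rule DERIV_imp_deriv)

lemma f_diff:
  assumes "(z, x) \<in> U"
  shows "f z - f x = (a * d - b * c) * (z - x) / ((c * z + d) * (c * x + d))"
  unfolding f_def using U_dom[OF assms] by (intro moebius_diff) auto

lemma lam_sq_eq:
  assumes "(z, x) \<in> U"
  shows "lam (z, x)^2 = (c * z + d) / (c * x + d)"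
proof -
  define u w k where "u = c * z + d" and "w = c * x + d" and "k = a * d - b * c"
  have nz: "u \<noteq> 0" "w \<noteq> 0" "z - x \<noteq> 0" "k \<noteq> 0"
    using U_dom[OF assms] moeb unfolding u_def w_def k_def by auto
  have "lam (z, x)^2 = k * (z - x) / (u * w) / (k / u^2 * (z - x))"
    using lam_sq[OF assms] f_diff[OF assms] deriv_f[of z] nz unfolding u_def w_def k_def by simp
  also have "\<dots> = u / w"
    using nz by (simp add: field_simps power2_eq_square)
  finally show ?thesis unfolding u_def w_def .
qed

lemma lam_sq_mult: "(z, x) \<in> U \<Longrightarrow> lam (z, x)^2 * (c * x + d) = c * z + d"
  using lam_sq_eq U_dom by (simp add: eq_divide_eq)

lemma lam_nonzero: "(z, x) \<in> U \<Longrightarrow> lam (z, x) \<noteq> 0"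
  using lam_sq_eq U_dom by fastforce

lemma lam_partial1:
  assumes zx: "(z, x) \<in> U"
  shows "partial1 lam (z, x) = c * lam (z, x) / (2 * (c * z + d))"
proof -
  define u w where "u = c * z + d" and "w = c * x + d"
  have nz: "u \<noteq> 0" "w \<noteq> 0" "lam (z, x) \<noteq> 0"
    using U_dom[OF zx] lam_nonzero[OF zx] unfolding u_def w_def by auto
  have "((\<lambda>t. lam (t, x)^2) has_field_derivative 2 * lam (z, x) * partial1 lam (z, x)) (at z)"
    using holo2_has_field_derivative_partial1[OF lam_holo zx] by (auto intro!: derivative_eq_intros)
  moreover have "((\<lambda>t. lam (t, x)^2) has_field_derivative c / w) (at z)"
  proof (rule has_field_derivative_transform_within_open[OF _ open_slice1[OF U_open]])
    show "((\<lambda>t. (c * t + d) / w) has_field_derivative c / w) (at z)"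
      using nz by (auto intro!: derivative_eq_intros)
    show "(c * t + d) / w = lam (t, x)^2" if "t \<in> {t. (t, x) \<in> U}" for t
      using lam_sq_eq that unfolding w_def by simp
  qed (use zx in simp)
  ultimately have "2 * lam (z, x) * partial1 lam (z, x) = c / w"
    by (rule DERIV_unique)
  then have "partial1 lam (z, x) = c / w / (2 * lam (z, x))"
    using nz by (simp add: field_simps)
  also have "\<dots> = c * lam (z, x) / (2 * (lam (z, x)^2 * w))"
    using nz by (simp add: field_simps power2_eq_square)
  also have "lam (z, x)^2 * w = u"
    using lam_sq_mult[OF zx] unfolding u_def w_def .
  finally show ?thesis unfolding u_def .
qed

lemma lam_partial2:
  assumes zx: "(z, x) \<in> U"
  shows "partial2 lam (z, x) = - c * lam (z, x) / (2 * (c * x + d))"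
proof -
  define u w where "u = c * z + d" and "w = c * x + d"
  have nz: "u \<noteq> 0" "w \<noteq> 0" "lam (z, x) \<noteq> 0"
    using U_dom[OF zx] lam_nonzero[OF zx] unfolding u_def w_def by auto
  have "((\<lambda>t. lam (z, t)^2) has_field_derivative 2 * lam (z, x) * partial2 lam (z, x)) (at x)"
    using holo2_has_field_derivative_partial2[OF lam_holo zx] by (auto intro!: derivative_eq_intros)
  moreover have "((\<lambda>t. lam (z, t)^2) has_field_derivative - c * u / w^2) (at x)"
  proof (rule has_field_derivative_transform_within_open[OF _ open_slice2[OF U_open]])
    show "((\<lambda>t. u / (c * t + d)) has_field_derivative - c * u / w^2) (at x)"
      using nz unfolding w_def by (auto intro!: derivative_eq_intros simp: power2_eq_square)
    show "u / (c * t + d) = lam (z, t)^2" if "t \<in> {t. (z, t) \<in> U}" for t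
      using lam_sq_eq that unfolding u_def by simp
  qed (use zx in simp)
  ultimately have "2 * lam (z, x) * partial2 lam (z, x) = - c * u / w^2"
    by (rule DERIV_unique)
  then have "partial2 lam (z, x) = - c * (u / w) / w / (2 * lam (z, x))"
    using nz by (simp add: field_simps power2_eq_square)
  also have "u / w = lam (z, x)^2"
    using lam_sq_eq[OF zx, folded u_def w_def] ..
  also have "- c * lam (z, x)^2 / w / (2 * lam (z, x)) = - c * lam (z, x) / (2 * w)"
    using nz by (simp add: field_simps power2_eq_square)
  finally show ?thesis unfolding w_def .
qed

lemma pullback_has_field_derivative1:
  assumes "holo2 g V" "(z, x) \<in> U"
  shows "((\<lambda>t. g (f t, f x)) has_field_derivative partial1 g (f z, f x) * deriv f z) (at z)"
proof -
  have "c * z + d \<noteq> 0" using U_dom[OF assms(2)] by simp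
  from DERIV_chain2[OF holo2_has_field_derivative_partial1[OF assms(1) UV[OF assms(2)]]
      f_has_field_derivative[OF this]]
  show ?thesis using deriv_f[OF \<open>c * z + d \<noteq> 0\<close>] by simp
qed

lemma pullback_has_field_derivative2:
  assumes "holo2 g V" "(z, x) \<in> U"
  shows "((\<lambda>t. g (f z, f t)) has_field_derivative partial2 g (f z, f x) * deriv f x) (at x)"
proof -
  have "c * x + d \<noteq> 0" using U_dom[OF assms(2)] by simp
  from DERIV_chain2[OF holo2_has_field_derivative_partial2[OF assms(1) UV[OF assms(2)]]
      f_has_field_derivative[OF this]]
  show ?thesis using deriv_f[OF \<open>c * x + d \<noteq> 0\<close>] by simp
qed

lemma alpha_of_eq:
  assumes "holo2 g V" "(z, x) \<in> U"
  shows "alpha_of g (z, x) = lam (z, x) * deriv f z * partial1 g (f z, f x)"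
  using DERIV_imp_deriv[OF pullback_has_field_derivative1[OF assms]]
  unfolding alpha_of_def partial1_def[of "\<lambda>q. g (f (fst q), f (snd q))"] by simp

lemma beta_of_eq:
  assumes "holo2 g V" "(z, x) \<in> U"
  shows "beta_of g (z, x) = deriv f x / lam (z, x) * partial2 g (f z, f x)"
  using DERIV_imp_deriv[OF pullback_has_field_derivative2[OF assms]]
  unfolding beta_of_def partial2_def[of "\<lambda>q. g (f (fst q), f (snd q))"] by simp

lemma alpha_of_has_field_derivative2:
  assumes hg: "holo2 g V" and zx: "(z, x) \<in> U"
  shows "((\<lambda>t. alpha_of g (z, t)) has_field_derivative
           - c * lam (z, x) / (2 * (c * x + d)) * deriv f z * partial1 g (f z, f x)
           + partial2 (partial1 g) (f z, f x) * deriv f x * (lam (z, x) * deriv f z)) (at x)"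
proof -
  have nx: "c * x + d \<noteq> 0" using U_dom[OF zx] by simp
  have dl: "((\<lambda>t. lam (z, t)) has_field_derivative - c * lam (z, x) / (2 * (c * x + d))) (at x)"
    using holo2_has_field_derivative_partial2[OF lam_holo zx] lam_partial2[OF zx] by simp
  have "((\<lambda>t. partial1 g (f z, f t)) has_field_derivative
          partial2 (partial1 g) (f z, f x) * deriv f x) (at x)"
    using DERIV_chain2[OF holo2_mixed_partials(1)[OF hg V_open UV[OF zx]] f_has_field_derivative[OF nx]]
      deriv_f[OF nx] by simp
  from DERIV_mult[OF DERIV_cmult_right[OF dl] this]
  show ?thesis
  proof (rule has_field_derivative_transform_within_open[OF _ open_slice2[OF U_open]])
    show "lam (z, t) * deriv f z * partial1 g (f z, f t) = alpha_of g (z, t)"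
      if "t \<in> {t. (z, t) \<in> U}" for t
      using alpha_of_eq[OF hg] that by simp
  qed (use zx in simp)
qed

lemma beta_of_has_field_derivative1:
  assumes hg: "holo2 g V" and zx: "(z, x) \<in> U"
  shows "((\<lambda>t. beta_of g (t, x)) has_field_derivative
           (0 * lam (z, x) - deriv f x * (c * lam (z, x) / (2 * (c * z + d)))) / (lam (z, x) * lam (z, x))
             * partial2 g (f z, f x)
           + partial2 (partial1 g) (f z, f x) * deriv f z * (deriv f x / lam (z, x))) (at z)"
proof -
  have nz: "c * z + d \<noteq> 0" using U_dom[OF zx] by simp
  have dl: "((\<lambda>t. lam (t, x)) has_field_derivative c * lam (z, x) / (2 * (c * z + d))) (at z)"
    using holo2_has_field_derivative_partial1[OF lam_holo zx] lam_partial1[OF zx] by simp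
  have "((\<lambda>t. partial2 g (f t, f x)) has_field_derivative
          partial2 (partial1 g) (f z, f x) * deriv f z) (at z)"
    using DERIV_chain2[OF holo2_mixed_partials(2)[OF hg V_open UV[OF zx]] f_has_field_derivative[OF nz]]
      deriv_f[OF nz] by simp
  from DERIV_mult[OF DERIV_divide[OF DERIV_const dl lam_nonzero[OF zx]] this]
  show ?thesis
  proof (rule has_field_derivative_transform_within_open[OF _ open_slice1[OF U_open]])
    show "deriv f x / lam (t, x) * partial2 g (f t, f x) = beta_of g (t, x)"
      if "t \<in> {t. (t, x) \<in> U}" for t
      using beta_of_eq[OF hg] that by simp
  qed (use zx in simp)
qed

lemma alpha_of_partial2:
  assumes hg: "holo2 g V" and epd: "epd_on g V" and zx: "(z, x) \<in> U"
  shows "((\<lambda>t. alpha_of g (z, t)) has_field_derivative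
           1 / (2 * (z - x)) * (alpha_of g (z, x) - beta_of g (z, x))) (at x)"
proof -
  define u w k l P Q where "u = c * z + d" and "w = c * x + d" and "k = a * d - b * c"
    and "l = lam (z, x)" and "P = partial1 g (f z, f x)" and "Q = partial2 g (f z, f x)"
  have nz: "k \<noteq> 0" "u \<noteq> 0" "w \<noteq> 0" "z - x \<noteq> 0" "l \<noteq> 0"
    using moeb U_dom[OF zx] lam_nonzero[OF zx] unfolding u_def w_def k_def l_def by auto
  have df: "deriv f z = k / u^2" "deriv f x = k / w^2"
    using deriv_f nz unfolding u_def w_def k_def by auto
  have "partial2 (partial1 g) (f z, f x) = 1 / (2 * (f z - f x)) * (P - Q)"
    using epd UV[OF zx] unfolding epd_on_def P_def Q_def by blast
  then have M: "partial2 (partial1 g) (f z, f x) = 1 / (2 * (k * (z - x) / (u * w))) * (P - Q)"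
    unfolding f_diff[OF zx] u_def w_def k_def .
  have beta: "beta_of g (z, x) = l * k / (u * w) * Q"
    using beta_of_eq[OF hg zx] lam_sq_mult[OF zx, folded u_def w_def l_def] df nz
    unfolding l_def Q_def by (auto simp: field_simps power2_eq_square)
  have alpha: "alpha_of g (z, x) = l * (k / u^2) * P"
    using alpha_of_eq[OF hg zx] df unfolding l_def P_def by simp
  have "- c * l / (2 * w) * deriv f z * P + partial2 (partial1 g) (f z, f x) * deriv f x * (l * deriv f z)
      = 1 / (2 * (z - x)) * (alpha_of g (z, x) - beta_of g (z, x))"
    unfolding M df alpha beta
    by (rule epd_alpha_identity[OF nz]) (simp add: u_def w_def algebra_simps)
  with alpha_of_has_field_derivative2[OF hg zx] show ?thesis
    unfolding l_def w_def P_def by simp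
qed

lemma beta_of_partial1:
  assumes hg: "holo2 g V" and epd: "epd_on g V" and zx: "(z, x) \<in> U"
  shows "((\<lambda>t. beta_of g (t, x)) has_field_derivative
           1 / (2 * (z - x)) * (alpha_of g (z, x) - beta_of g (z, x))) (at z)"
proof -
  define u w k l P Q where "u = c * z + d" and "w = c * x + d" and "k = a * d - b * c"
    and "l = lam (z, x)" and "P = partial1 g (f z, f x)" and "Q = partial2 g (f z, f x)"
  have nz: "k \<noteq> 0" "u \<noteq> 0" "w \<noteq> 0" "z - x \<noteq> 0" "l \<noteq> 0"
    using moeb U_dom[OF zx] lam_nonzero[OF zx] unfolding u_def w_def k_def l_def by auto
  have df: "deriv f z = k / u^2" "deriv f x = k / w^2"
    using deriv_f nz unfolding u_def w_def k_def by auto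
  have "partial2 (partial1 g) (f z, f x) = 1 / (2 * (f z - f x)) * (P - Q)"
    using epd UV[OF zx] unfolding epd_on_def P_def Q_def by blast
  then have M: "partial2 (partial1 g) (f z, f x) = 1 / (2 * (k * (z - x) / (u * w))) * (P - Q)"
    unfolding f_diff[OF zx] u_def w_def k_def .
  have alpha: "alpha_of g (z, x) = k / (l * u * w) * P"
    using alpha_of_eq[OF hg zx] lam_sq_mult[OF zx, folded u_def w_def l_def] df nz
    unfolding l_def P_def by (auto simp: field_simps power2_eq_square)
  have beta: "beta_of g (z, x) = k / w^2 / l * Q"
    using beta_of_eq[OF hg zx] df unfolding l_def Q_def by simp
  have "(0 * l - deriv f x * (c * l / (2 * u))) / (l * l) * Q
        + partial2 (partial1 g) (f z, f x) * deriv f z * (deriv f x / l)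
      = 1 / (2 * (z - x)) * (alpha_of g (z, x) - beta_of g (z, x))"
    unfolding M df alpha beta
    by (rule epd_beta_identity[OF nz]) (simp add: u_def w_def algebra_simps)
  with beta_of_has_field_derivative1[OF hg zx] show ?thesis
    unfolding l_def u_def Q_def by simp
qed

lemma holo2_pullback:
  assumes "holo2 g V"
  shows "holo2 (\<lambda>q. g (f (fst q), f (snd q))) U"
  unfolding holo2_def
proof
  fix p assume "p \<in> U"
  then obtain z x where p: "p = (z, x)" "(z, x) \<in> U" by (metis prod.collapse)
  have nz: "c * z + d \<noteq> 0" "c * x + d \<noteq> 0" using U_dom[OF p(2)] by auto
  have d1: "((\<lambda>q. (f (fst q), f (snd q))) has_derivative
          (\<lambda>h. (deriv f z * fst h, deriv f x * snd h))) (at (z, x))"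
    using f_has_field_derivative[OF nz(1)] f_has_field_derivative[OF nz(2)] deriv_f nz
    unfolding has_field_derivative_def
    by (auto intro!: derivative_eq_intros has_derivative_compose[of fst _ _ _ f]
                     has_derivative_compose[of snd _ _ _ f] simp: mult.commute)
  have d2: "(g has_derivative (\<lambda>h. partial1 g (f z, f x) * fst h + partial2 g (f z, f x) * snd h))
                   (at (f (fst (z, x)), f (snd (z, x))))"
    using holo2_has_derivative[OF assms UV[OF p(2)]] by simp
  from has_derivative_compose[OF d1 d2]
  have "((\<lambda>q. g (f (fst q), f (snd q))) has_derivative
      (\<lambda>h. partial1 g (f z, f x) * (deriv f z * fst h) + partial2 g (f z, f x) * (deriv f x * snd h)))
      (at (z, x))"
    by simp
  then
  show "\<exists>A B. ((\<lambda>q. g (f (fst q), f (snd q))) has_derivative (\<lambda>h. A * fst h + B * snd h)) (at p)"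
    unfolding p(1) mult.assoc[symmetric] by blast
qed

lemma continuous_on_alpha_of: "holo2 g V \<Longrightarrow> continuous_on U (alpha_of g)"
  unfolding alpha_of_def[abs_def]
  by (intro continuous_intros holo2_imp_continuous_on[OF lam_holo]
      continuous_on_partial1[OF holo2_pullback U_open])

lemma continuous_on_beta_of: "holo2 g V \<Longrightarrow> continuous_on U (beta_of g)"
  unfolding beta_of_def[abs_def] using lam_nonzero
  by (intro continuous_intros holo2_imp_continuous_on[OF lam_holo]
      continuous_on_partial2[OF holo2_pullback U_open]) auto

lemma alpha_of_field_differentiable_slice1:
  assumes "holo2 g V" "(z, x) \<in> U"
  shows "(\<lambda>t. alpha_of g (t, x)) field_differentiable at z"
  unfolding alpha_of_def
proof (rule field_differentiable_mult)
  show "(\<lambda>t. lam (t, x)) field_differentiable at z"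
    using holo2_has_field_derivative_partial1[OF lam_holo assms(2)] field_differentiable_def by blast
  show "(\<lambda>t. partial1 (\<lambda>q. g (f (fst q), f (snd q))) (t, x)) field_differentiable at z"
    by (rule holo2_partial1_field_differentiable_slice1[OF holo2_pullback[OF assms(1)] U_open assms(2)])
qed

lemma beta_of_field_differentiable_slice2:
  assumes "holo2 g V" "(z, x) \<in> U"
  shows "(\<lambda>t. beta_of g (z, t)) field_differentiable at x"
  unfolding beta_of_def
proof (intro field_differentiable_mult field_differentiable_divide)
  show "(\<lambda>t. lam (z, t)) field_differentiable at x"
    using holo2_has_field_derivative_partial2[OF lam_holo assms(2)] field_differentiable_def by blast
  show "(\<lambda>t. partial2 (\<lambda>q. g (f (fst q), f (snd q))) (z, t)) field_differentiable at x"
    by (rule holo2_partial2_field_differentiable_slice2[OF holo2_pullback[OF assms(1)] U_open assms(2)])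
qed (use lam_nonzero[OF assms(2)] in auto)

lemma exists_primitive_alpha_beta_of:
  assumes hg: "holo2 g V" and epd: "epd_on g V"
    and XY: "open X" "convex X" "open Y" "convex Y" "Y \<noteq> {}" "X \<times> Y \<subseteq> U"
  obtains F where
    "\<And>p. p \<in> X \<times> Y \<Longrightarrow> (F has_derivative (\<lambda>h. alpha_of g p * fst h + beta_of g p * snd h)) (at p)"
proof -
  obtain x0 where "x0 \<in> Y" using XY(5) by blast
  let ?m = "\<lambda>p. 1 / (2 * (fst p - snd p)) * (alpha_of g p - beta_of g p)"
  have "continuous_on (X \<times> Y) (alpha_of g)" "continuous_on (X \<times> Y) (beta_of g)"
    using continuous_on_alpha_of[OF hg] continuous_on_beta_of[OF hg] XY(6)
    by (auto intro: continuous_on_subset)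
  moreover have "\<forall>p \<in> X \<times> Y. 2 * (fst p - snd p) \<noteq> 0"
    using XY(6) U_dom by fastforce
  ultimately have "continuous_on (X \<times> Y) ?m"
    by (intro continuous_intros) auto
  then show thesis
  proof (rule exists_primitive_on_convex_Times[OF XY(1-4) \<open>x0 \<in> Y\<close> \<open>continuous_on (X \<times> Y) (beta_of g)\<close>])
    show "(\<lambda>t. alpha_of g (t, x0)) field_differentiable at z" if "z \<in> X" for z
      using alpha_of_field_differentiable_slice1[OF hg] that \<open>x0 \<in> Y\<close> XY(6) by blast
    show "(\<lambda>t. beta_of g (z, t)) field_differentiable at x" if "z \<in> X" "x \<in> Y" for z x
      using beta_of_field_differentiable_slice2[OF hg] that XY(6) by blast
    show "((\<lambda>t. alpha_of g (z, t)) has_field_derivative ?m (z, x)) (at x)" if "z \<in> X" "x \<in> Y" for z x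
      using alpha_of_partial2[OF hg epd] that XY(6) by auto
    show "((\<lambda>t. beta_of g (t, x)) has_field_derivative ?m (z, x)) (at z)" if "z \<in> X" "x \<in> Y" for z x
      using beta_of_partial1[OF hg epd] that XY(6) by auto
  qed (use that in blast)
qed

end

lemma Hform_csc:
  assumes "mu \<noteq> 0" "nu \<noteq> 0"
  shows "Hform (csc mu P) (csc nu Q) v = Hform P Q v / (mu * nu)"
proof -
  have "(mu * snd P * fst v - mu * fst P * snd v) * (nu * snd Q * fst v - nu * fst Q * snd v)
        = mu * nu * ((snd P * fst v - fst P * snd v) * (snd Q * fst v - fst Q * snd v))"
    by (simp add: algebra_simps)
  moreover have "(mu * snd P * (nu * fst Q) - mu * fst P * (nu * snd Q))^2
                 = (mu * nu)^2 * (snd P * fst Q - fst P * snd Q)^2"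
    by (simp add: power2_eq_square algebra_simps)
  ultimately show ?thesis
    using assms unfolding Hform_def csc_def by (simp add: power2_eq_square)
qed

lemma pd2_cong_on_open:
  assumes "open W" "\<And>q. q \<in> W \<Longrightarrow> H q = K q" "p \<in> W"
  shows "pd2 H p = pd2 K p"
proof -
  have "eventually (\<lambda>t. t \<in> {t. (fst p, t) \<in> W}) (nhds (snd p))"
    by (rule eventually_nhds_in_open[OF open_slice2[OF assms(1)]]) (use assms(3) in simp)
  then have "eventually (\<lambda>t. H (fst p, t) = K (fst p, t)) (nhds (snd p))"
    by (rule eventually_mono) (simp add: assms(2))
  then have "eventually (\<lambda>t. fst (H (fst p, t)) = fst (K (fst p, t))) (nhds (snd p))"
    and "eventually (\<lambda>t. snd (H (fst p, t)) = snd (K (fst p, t))) (nhds (snd p))"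
    by (auto elim: eventually_mono)
  then show ?thesis
    unfolding pd2_def by (simp add: deriv_cong_ev)
qed

locale epd_pullback = moebius_pullback +
  fixes G :: "complex \<times> complex \<Rightarrow> complex \<times> complex"
  assumes G_holo: "holoC2 G V"
    and G_epd: "\<And>r s. (r, s) \<in> V \<Longrightarrow>
                  pd2 (pd1 G) (r, s) = csc (1 / (2 * (r - s))) (pd1 G (r, s) - pd2 G (r, s))"
begin

definition alpha' :: "complex \<times> complex \<Rightarrow> complex \<times> complex" where
  "alpha' = (\<lambda>p. csc (lam p) (pd1 (\<lambda>q. G (f (fst q), f (snd q))) p))"

definition beta' :: "complex \<times> complex \<Rightarrow> complex \<times> complex" where
  "beta' = (\<lambda>p. csc (1 / lam p) (pd2 (\<lambda>q. G (f (fst q), f (snd q))) p))"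

lemma alpha'_eq: "alpha' p = (alpha_of (\<lambda>q. fst (G q)) p, alpha_of (\<lambda>q. snd (G q)) p)"
  unfolding alpha'_def alpha_of_def csc_def pd1_eq_partial1 by simp

lemma beta'_eq: "beta' p = (beta_of (\<lambda>q. fst (G q)) p, beta_of (\<lambda>q. snd (G q)) p)"
  unfolding beta'_def beta_of_def csc_def pd2_eq_partial2 by simp

lemma holo2_G: "holo2 (\<lambda>q. fst (G q)) V" "holo2 (\<lambda>q. snd (G q)) V"
  using G_holo unfolding holoC2_def by auto

lemma epd_on_G: "epd_on (\<lambda>q. fst (G q)) V" "epd_on (\<lambda>q. snd (G q)) V"
  using G_epd unfolding epd_on_def pd1_eq_partial1 pd2_eq_partial2 csc_def
  by (auto simp: partial1_def partial2_def)

lemma alpha'_beta'_epd: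
  assumes "(z, x) \<in> U"
  shows "pd2 alpha' (z, x) = csc (1 / (2 * (z - x))) (alpha' (z, x) - beta' (z, x))"
    and "pd1 beta' (z, x) = csc (1 / (2 * (z - x))) (alpha' (z, x) - beta' (z, x))"
  using alpha_of_partial2[OF holo2_G(1) epd_on_G(1) assms] alpha_of_partial2[OF holo2_G(2) epd_on_G(2) assms]
    beta_of_partial1[OF holo2_G(1) epd_on_G(1) assms] beta_of_partial1[OF holo2_G(2) epd_on_G(2) assms]
  unfolding pd1_def pd2_def alpha'_eq beta'_eq csc_def by (auto dest: DERIV_imp_deriv)

lemma exists_potential:
  assumes "p \<in> U"
  obtains W F where "open W" "p \<in> W" "W \<subseteq> U" "holoC2 F W"
    "\<And>q. q \<in> W \<Longrightarrow> pd1 F q = alpha' q \<and> pd2 F q = beta' q"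
proof -
  obtain z0 x0 e where e: "p = (z0, x0)" "e > 0" "cball z0 e \<times> cball x0 e \<subseteq> U"
    by (metis open_contains_cball_Times[OF U_open] assms prod.collapse)
  define W where "W = ball z0 e \<times> ball x0 e"
  have W: "open W" "p \<in> W" "W \<subseteq> U"
    using e unfolding W_def by (auto simp: open_Times)
  have XY: "open (ball z0 e)" "convex (ball z0 e)" "open (ball x0 e)" "convex (ball x0 e)"
    "ball x0 e \<noteq> {}" "ball z0 e \<times> ball x0 e \<subseteq> U"
    using W e(2) unfolding W_def by auto
  obtain F1 where F1: "\<And>q. q \<in> W \<Longrightarrow>
      (F1 has_derivative (\<lambda>h. alpha_of (\<lambda>q. fst (G q)) q * fst h + beta_of (\<lambda>q. fst (G q)) q * snd h)) (at q)"
    using exists_primitive_alpha_beta_of[OF holo2_G(1) epd_on_G(1) XY] unfolding W_def by blast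
  obtain F2 where F2: "\<And>q. q \<in> W \<Longrightarrow>
      (F2 has_derivative (\<lambda>h. alpha_of (\<lambda>q. snd (G q)) q * fst h + beta_of (\<lambda>q. snd (G q)) q * snd h)) (at q)"
    using exists_primitive_alpha_beta_of[OF holo2_G(2) epd_on_G(2) XY] unfolding W_def by blast
  have "holo2 F1 W" "holo2 F2 W"
    unfolding holo2_def using F1 F2 by blast+
  then have "holoC2 (\<lambda>q. (F1 q, F2 q)) W"
    unfolding holoC2_def by simp
  moreover have "pd1 (\<lambda>q. (F1 q, F2 q)) q = alpha' q \<and> pd2 (\<lambda>q. (F1 q, F2 q)) q = beta' q"
    if "q \<in> W" for q
    using has_derivative_pair_imp_partials[OF F1[OF that]] has_derivative_pair_imp_partials[OF F2[OF that]]
    unfolding pd1_eq_partial1 pd2_eq_partial2 alpha'_eq beta'_eq by simp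
  ultimately show thesis using that W by blast
qed

lemma metric_pullback:
  assumes zx: "(z, x) \<in> U"
  shows "(deriv f z * w1) * (deriv f x * w2) + Hform (pd1 G (f z, f x)) (pd2 G (f z, f x)) v
         = deriv f z * deriv f x * (w1 * w2 + Hform (alpha' (z, x)) (beta' (z, x)) v)"
proof -
  have nz: "deriv f z \<noteq> 0" "deriv f x \<noteq> 0" "lam (z, x) \<noteq> 0"
    using U_dom[OF zx] deriv_f moeb lam_nonzero[OF zx] by auto
  have "alpha' (z, x) = csc (lam (z, x) * deriv f z) (pd1 G (f z, f x))"
    using alpha_of_eq[OF holo2_G(1) zx] alpha_of_eq[OF holo2_G(2) zx]
    unfolding alpha'_eq csc_def pd1_eq_partial1 by simp
  moreover have "beta' (z, x) = csc (deriv f x / lam (z, x)) (pd2 G (f z, f x))"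
    using beta_of_eq[OF holo2_G(1) zx] beta_of_eq[OF holo2_G(2) zx]
    unfolding beta'_eq csc_def pd2_eq_partial2 by simp
  ultimately have "Hform (alpha' (z, x)) (beta' (z, x)) v
                   = Hform (pd1 G (f z, f x)) (pd2 G (f z, f x)) v / (deriv f z * deriv f x)"
    using nz by (simp add: Hform_csc)
  then show ?thesis
    using nz by (simp add: field_simps)
qed

lemma local_potential_solves_epd:
  assumes pU: "p \<in> U"
  shows "\<exists>W F. open W \<and> p \<in> W \<and> W \<subseteq> U \<and> holoC2 F W \<and>
           (\<forall>z x. (z, x) \<in> W \<longrightarrow> pd1 F (z, x) = alpha' (z, x) \<and> pd2 F (z, x) = beta' (z, x) \<and>
              pd2 (pd1 F) (z, x) = csc (1 / (2 * (z - x))) (pd1 F (z, x) - pd2 F (z, x)) \<and>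
              (\<forall>w1 w2 v. (deriv f z * w1) * (deriv f x * w2)
                             + Hform (pd1 G (f z, f x)) (pd2 G (f z, f x)) v
                           = deriv f z * deriv f x * (w1 * w2 + Hform (pd1 F (z, x)) (pd2 F (z, x)) v)))"
proof -
  obtain W F where W: "open W" "p \<in> W" "W \<subseteq> U" "holoC2 F W"
    and F: "\<And>q. q \<in> W \<Longrightarrow> pd1 F q = alpha' q \<and> pd2 F q = beta' q"
    by (rule exists_potential[OF pU]) blast
  have "pd2 (pd1 F) q = pd2 alpha' q" if "q \<in> W" for q
    using pd2_cong_on_open[OF W(1) _ that] F by blast
  then show ?thesis
    using W F alpha'_beta'_epd metric_pullback by (intro exI[of _ W] exI[of _ F]) auto
qed

end

theorem mainTheorem10:
  fixes a b c d :: complex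
    and U V :: "(complex \<times> complex) set"
    and G :: "complex \<times> complex \<Rightarrow> complex \<times> complex"
    and lam :: "complex \<times> complex \<Rightarrow> complex"
    and f :: "complex \<Rightarrow> complex"
    and alpha beta :: "complex \<times> complex \<Rightarrow> complex \<times> complex"
  assumes moeb: "a * d - b * c \<noteq> 0"
    and f_def: "f = moebius a b c d"
    and U_open: "open U"
    and U_dom: "\<forall>z x. (z, x) \<in> U \<longrightarrow> c * z + d \<noteq> 0 \<and> c * x + d \<noteq> 0 \<and> z \<noteq> x"
    and V_open: "open V"
    and V_diag: "\<forall>r s. (r, s) \<in> V \<longrightarrow> r \<noteq> s"
    and UV: "\<forall>z x. (z, x) \<in> U \<longrightarrow> (f z, f x) \<in> V"
    and G_holo: "holoC2 G V"
    and G_eq: "\<forall>r s. (r, s) \<in> V \<longrightarrow>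
                 pd2 (pd1 G) (r, s) = csc (1 / (2 * (r - s))) (pd1 G (r, s) - pd2 G (r, s))"
    and lam_holo: "holo2 lam U"
    and lam_sq: "\<forall>z x. (z, x) \<in> U \<longrightarrow>
                 (lam (z, x))\<^sup>2 = (f z - f x) / (deriv f z * (z - x))"
    and alpha_def: "alpha = (\<lambda>p. csc (lam p) (pd1 (\<lambda>q. G (f (fst q), f (snd q))) p))"
    and beta_def: "beta = (\<lambda>p. csc (1 / lam p) (pd2 (\<lambda>q. G (f (fst q), f (snd q))) p))"
  shows "(\<forall>z x. (z, x) \<in> U \<longrightarrow>
            pd2 alpha (z, x) = csc (1 / (2 * (z - x))) (alpha (z, x) - beta (z, x)) \<and>
            pd1 beta (z, x) = csc (1 / (2 * (z - x))) (alpha (z, x) - beta (z, x)))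
       \<and> (\<forall>p\<in>U. \<exists>W F. open W \<and> p \<in> W \<and> W \<subseteq> U \<and> holoC2 F W \<and>
            (\<forall>z x. (z, x) \<in> W \<longrightarrow>
               pd1 F (z, x) = alpha (z, x) \<and> pd2 F (z, x) = beta (z, x) \<and>
               pd2 (pd1 F) (z, x) = csc (1 / (2 * (z - x))) (pd1 F (z, x) - pd2 F (z, x)) \<and>
               (\<forall>w1 w2 v. (deriv f z * w1) * (deriv f x * w2)
                            + Hform (pd1 G (f z, f x)) (pd2 G (f z, f x)) v
                          = deriv f z * deriv f x * (w1 * w2 + Hform (pd1 F (z, x)) (pd2 F (z, x)) v))))"
proof -
  interpret epd_pullback a b c d f U V lam G
    by unfold_locales (use assms in auto)
  have "alpha = alpha'" "beta = beta'"
    unfolding alpha_def beta_def alpha'_def beta'_def by simp_all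
  then show ?thesis
    using alpha'_beta'_epd local_potential_solves_epd by simp
qed

end
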